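(* Let $\psi\in\mathcal K$ have radius of convergence $R_\psi>0$ and Khinchin family $(Y_t)$, and for $t\in(0,R_\psi)$ let $q(t)$ be the extinction probability of the Galton–Watson process with offspring distribution $Y_t$. If $\lim_{t\uparrow R_\psi}\psi(t)/t=+\infty$, then $$q(t)\sim\frac{\psi(0)}{\psi(t)}\qquad\text{as }t\uparrow R_\psi.$$
   Context: $\mathcal K$ is the class of non-constant power series $f(z)=\sum_{n\ge0}a_nz^n$ with positive radius of convergence $R$, non-negative coefficients and $a_0>0$; its Khinchin family is given by $\mathbf P(X_t=n)=a_nt^n/f(t)$ for $n\ge0$, $t\in(0,R)$. The extinction probability is the probability that the Galton–Watson tree is finite. $a(t)\sim b(t)$ means $a(t)/b(t)\to1$. *)

theory Defs
  imports "HOL-Analysis.Analysis" "HOL-Library.Landau_Symbols"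
begin

definition in_K :: "(nat \<Rightarrow> real) \<Rightarrow> bool" where
  "in_K a \<longleftrightarrow> (\<forall>n. a n \<ge> 0) \<and> a 0 > 0 \<and> (\<exists>n>0. a n \<noteq> 0) \<and> conv_radius a > 0"

definition pseries :: "(nat \<Rightarrow> real) \<Rightarrow> real \<Rightarrow> real" where
  "pseries a t = (\<Sum>n. a n * t ^ n)"

definition khinchin_pmf :: "(nat \<Rightarrow> real) \<Rightarrow> real \<Rightarrow> nat \<Rightarrow> real" where
  "khinchin_pmf a t n = a n * t ^ n / pseries a t"

definition offspring_pgf :: "(nat \<Rightarrow> real) \<Rightarrow> real \<Rightarrow> real \<Rightarrow> real" where
  "offspring_pgf a t s = (\<Sum>n. khinchin_pmf a t n * s ^ n)"

text \<open>Extinction probability of the Galton-Watson process with offspring X_t: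
  P(tree finite) = lim_k P(Z_k = 0) = lim_k g^k(0), with g the offspring pgf.\<close>
definition extinction_prob :: "(nat \<Rightarrow> real) \<Rightarrow> real \<Rightarrow> real" where
  "extinction_prob a t = lim (\<lambda>k. (offspring_pgf a t ^^ k) 0)"

definition at_left_ereal :: "ereal \<Rightarrow> real filter" where
  "at_left_ereal R = (if R = \<infinity> then at_top else at_left (real_of_ereal R))"

end

theory Submission
  imports Defs
begin

text \<open>
  Write \<psi> for the power series with coefficients a. The offspring generating function of
  Y_t is g_t(s) = \<psi>(t s) / \<psi>(t), and q(t) is the limit of the increasing iterates
  g_t^k(0), so q(t) \<ge> g_t(0) = \<psi>(0) / \<psi>(t). Conversely, fix a small e > 0. Since
  \<psi>(t)/t \<rightarrow> \<infinity>, eventually \<psi>(e)/e \<le> \<psi>(t)/t; then g_t maps [0, e/t] into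
  itself, so q(t) \<le> g_t(e/t) = \<psi>(e) / \<psi>(t). Hence eventually
  1 \<le> q(t) \<psi>(t) / \<psi>(0) \<le> \<psi>(e) / \<psi>(0), and the upper bound tends to 1 as e \<rightarrow> 0
  by continuity of \<psi> at 0.
\<close>

lemma pseries_0 [simp]: "pseries a 0 = a 0"
  by (simp add: pseries_def)

lemma pseries_mono:
  assumes "\<And>n. a n \<ge> 0" "0 \<le> x" "x \<le> y" "ereal y < conv_radius a"
  shows "pseries a x \<le> pseries a y"
proof -
  have "ereal x < conv_radius a"
    using assms(3,4) by (meson ereal_less_eq(3) le_less_trans)
  then have "summable (\<lambda>n. a n * x ^ n)" "summable (\<lambda>n. a n * y ^ n)"
    using assms(2-4) summable_in_conv_radius[of x a] summable_in_conv_radius[of y a] by auto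
  then show ?thesis
    unfolding pseries_def using assms(1-3)
    by (intro suminf_le) (auto intro!: mult_left_mono power_mono)
qed

lemma pseries_ge_coeff_0:
  assumes "\<And>n. a n \<ge> 0" "0 \<le> x" "ereal x < conv_radius a"
  shows "a 0 \<le> pseries a x"
  using pseries_mono[OF assms(1) order_refl assms(2,3)] by simp

lemma pseries_tendsto_at_right_0:
  assumes "conv_radius a > 0"
  shows "(pseries a \<longlongrightarrow> a 0) (at_right 0)"
proof -
  obtain c where c: "0 < ereal c" "ereal c < conv_radius a"
    using ereal_dense2[OF assms] by blast
  then have "isCont (\<lambda>x. \<Sum>n. a n * x ^ n) 0"
    by (intro isCont_powser[of _ c] summable_in_conv_radius) auto
  then have "(pseries a \<longlongrightarrow> pseries a 0) (at 0)"
    unfolding isCont_def pseries_def [abs_def] .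
  then show ?thesis
    using filterlim_at_split by fastforce
qed

lemma offspring_pgf_eq_pseries:
  assumes "ereal \<bar>t * s\<bar> < conv_radius a"
  shows "offspring_pgf a t s = pseries a (t * s) / pseries a t"
proof -
  have "offspring_pgf a t s = (\<Sum>n. a n * (t * s) ^ n / pseries a t)"
    unfolding offspring_pgf_def khinchin_pmf_def by (simp add: power_mult_distrib mult.assoc)
  also have "\<dots> = pseries a (t * s) / pseries a t"
    unfolding pseries_def using assms by (intro suminf_divide summable_in_conv_radius) auto
  finally show ?thesis .
qed

lemma iterates_from_0_bounds:
  fixes g :: "real \<Rightarrow> real"
  assumes mono: "\<And>x y. 0 \<le> x \<Longrightarrow> x \<le> y \<Longrightarrow> y \<le> b \<Longrightarrow> g x \<le> g y"
    and "0 \<le> b" "0 \<le> g 0" "g b \<le> b"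
  shows "g 0 \<le> lim (\<lambda>k. (g ^^ k) 0)" "lim (\<lambda>k. (g ^^ k) 0) \<le> g b"
proof -
  define q where "q k = (g ^^ k) 0" for k
  have q_Suc: "q (Suc k) = g (q k)" for k
    by (simp add: q_def)
  have q_step: "0 \<le> q k \<and> q k \<le> q (Suc k) \<and> q (Suc k) \<le> b" for k
  proof (induction k)
    case 0
    have "g 0 \<le> g b"
      using mono[of 0 b] assms(2) by simp
    then show ?case
      using assms(3,4) by (simp add: q_def)
  next
    case (Suc k)
    then have "g (q k) \<le> g (q (Suc k))" "g (q (Suc k)) \<le> g b"
      using mono by auto
    then show ?case
      using Suc assms(4) by (simp add: q_Suc)
  qed
  have "incseq q"
    using q_step by (auto intro: incseq_SucI)
  moreover have q_le: "\<forall>k. q k \<le> b"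
    using q_step by (meson order_trans)
  ultimately obtain L where L: "q \<longlonglongrightarrow> L"
    by (rule incseq_convergent)
  then have lim_q: "lim q = L"
    by (rule limI)
  have "g 0 \<le> L"
    using incseq_le[OF \<open>incseq q\<close> L, of 1] by (simp add: q_def)
  moreover have "L \<le> g b"
  proof (rule LIMSEQ_le_const2)
    show "(\<lambda>k. q (Suc k)) \<longlonglongrightarrow> L"
      using L by (rule LIMSEQ_Suc)
    have "q (Suc k) \<le> g b" for k
      using mono[of "q k" b] q_step q_le by (simp add: q_Suc)
    then show "\<exists>N. \<forall>k\<ge>N. q (Suc k) \<le> g b"
      by blast
  qed
  ultimately show "g 0 \<le> lim (\<lambda>k. (g ^^ k) 0)" "lim (\<lambda>k. (g ^^ k) 0) \<le> g b"
    using lim_q by (simp_all add: q_def [abs_def])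
qed

lemma extinction_prob_bounds:
  assumes nonneg: "\<And>n. a n \<ge> 0" and "a 0 > 0"
    and e: "0 < e" "ereal e < conv_radius a"
    and t: "0 < t" "ereal t < conv_radius a"
    and ratio: "pseries a e / e \<le> pseries a t / t"
  shows "pseries a 0 / pseries a t \<le> extinction_prob a t"
    and "extinction_prob a t \<le> pseries a e / pseries a t"
proof -
  define g where "g = offspring_pgf a t"
  have Pt: "pseries a t > 0"
    using pseries_ge_coeff_0[OF nonneg _ t(2)] assms(2) t(1) by fastforce
  have g_eq: "g s = pseries a (t * s) / pseries a t" if "0 \<le> s" "s \<le> e / t" for s
  proof -
    have "\<bar>t * s\<bar> \<le> e"
      using that t(1) by (simp add: field_simps)
    then have "ereal \<bar>t * s\<bar> < conv_radius a"
      using e(2) by (meson ereal_less_eq(3) le_less_trans)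
    then show ?thesis
      unfolding g_def by (rule offspring_pgf_eq_pseries)
  qed
  have g_mono: "g x \<le> g y" if xy: "0 \<le> x" "x \<le> y" "y \<le> e / t" for x y
  proof -
    have "t * y \<le> e"
      using xy(3) t(1) by (simp add: field_simps)
    then have "ereal (t * y) < conv_radius a"
      using e(2) by (meson ereal_less_eq(3) le_less_trans)
    then have "pseries a (t * x) \<le> pseries a (t * y)"
      using xy t(1) by (intro pseries_mono[OF nonneg]) auto
    then show "g x \<le> g y"
      using xy g_eq Pt by (simp add: divide_right_mono)
  qed
  have "g (e / t) = pseries a e / pseries a t"
    using g_eq[of "e / t"] e(1) t(1) by simp
  also have "\<dots> \<le> e / t"
    using ratio e(1) t(1) Pt by (simp add: field_simps)
  finally have "g (e / t) \<le> e / t" .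
  moreover have "0 \<le> e / t" "0 \<le> g 0"
    using e(1) t(1) g_eq[of 0] nonneg[of 0] Pt by simp_all
  ultimately have "g 0 \<le> lim (\<lambda>k. (g ^^ k) 0)" "lim (\<lambda>k. (g ^^ k) 0) \<le> g (e / t)"
    using iterates_from_0_bounds[of "e / t" g] g_mono by auto
  then show "pseries a 0 / pseries a t \<le> extinction_prob a t"
    "extinction_prob a t \<le> pseries a e / pseries a t"
    using g_eq[of 0] g_eq[of "e / t"] e(1) t(1) by (simp_all add: extinction_prob_def g_def)
qed

lemma eventually_at_left_ereal:
  assumes "ereal c < R"
  shows "eventually (\<lambda>t. c < t \<and> ereal t < R) (at_left_ereal R)"
proof (cases R)
  case (real r)
  then show ?thesis
    using assms eventually_at_left_real[of c r]
    by (auto simp: at_left_ereal_def elim!: eventually_mono)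
next
  case PInf
  then show ?thesis
    using eventually_gt_at_top[of c] by (simp add: at_left_ereal_def)
next
  case MInf
  then show ?thesis
    using assms by simp
qed

lemma extinction_prob_ratio_eventually_bounds:
  assumes "in_K a"
    and growth: "filterlim (\<lambda>t. pseries a t / t) at_top (at_left_ereal (conv_radius a))"
    and e: "0 < e" "ereal e < conv_radius a"
  shows "\<forall>\<^sub>F t in at_left_ereal (conv_radius a).
    1 \<le> extinction_prob a t / (pseries a 0 / pseries a t) \<and>
    extinction_prob a t / (pseries a 0 / pseries a t) \<le> pseries a e / pseries a 0"
proof -
  have nonneg: "\<And>n. a n \<ge> 0" and a0: "a 0 > 0"
    using assms(1) unfolding in_K_def by auto
  have "\<forall>\<^sub>F t in at_left_ereal (conv_radius a). pseries a e / e \<le> pseries a t / t"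
    using growth by (simp add: filterlim_at_top)
  moreover have "\<forall>\<^sub>F t in at_left_ereal (conv_radius a). e < t \<and> ereal t < conv_radius a"
    using e(2) by (rule eventually_at_left_ereal)
  ultimately show ?thesis
  proof eventually_elim
    case (elim t)
    then have "pseries a 0 / pseries a t \<le> extinction_prob a t"
      "extinction_prob a t \<le> pseries a e / pseries a t"
      using extinction_prob_bounds[OF nonneg a0 e] e(1) by auto
    moreover have "pseries a t > 0"
      using pseries_ge_coeff_0[OF nonneg, of t] elim e(1) a0 by fastforce
    ultimately show ?case
      using a0 by (simp add: field_simps)
  qed
qed

theorem proposition6p6:
  fixes a :: "nat \<Rightarrow> real"
  assumes "in_K a"
    and "filterlim (\<lambda>t. pseries a t / t) at_top (at_left_ereal (conv_radius a))"
  shows "(\<lambda>t. extinction_prob a t) \<sim>[at_left_ereal (conv_radius a)] (\<lambda>t. pseries a 0 / pseries a t)"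
proof -
  let ?ratio = "\<lambda>t. extinction_prob a t / (pseries a 0 / pseries a t)"
  have a0: "a 0 > 0" and R: "conv_radius a > 0"
    using assms(1) unfolding in_K_def by auto
  obtain c where c: "0 < c" "ereal c < conv_radius a"
    using ereal_dense2[OF R] by auto
  have "(?ratio \<longlongrightarrow> 1) (at_left_ereal (conv_radius a))"
  proof (rule order_tendstoI)
    fix y :: real assume "y < 1"
    then show "\<forall>\<^sub>F t in at_left_ereal (conv_radius a). y < ?ratio t"
      using extinction_prob_ratio_eventually_bounds[OF assms c] by (auto elim: eventually_mono)
  next
    fix y :: real assume "1 < y"
    have "\<forall>\<^sub>F e in at_right 0. pseries a e < y * a 0 \<and> e \<in> {0<..<c}"
      using order_tendstoD(2)[OF pseries_tendsto_at_right_0[OF R], of "y * a 0"]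
        eventually_at_right_real[OF c(1)] \<open>1 < y\<close> a0
      by (auto intro: eventually_conj)
    then obtain e where e: "pseries a e < y * a 0" "0 < e" "e < c"
      using eventually_happens'[of "at_right (0::real)"] by auto
    then have "ereal e < conv_radius a"
      using c(2) by (meson ereal_less_eq(3) less_imp_le le_less_trans)
    moreover have "pseries a e / pseries a 0 < y"
      using e(1) a0 by (simp add: field_simps)
    ultimately show "\<forall>\<^sub>F t in at_left_ereal (conv_radius a). ?ratio t < y"
      using extinction_prob_ratio_eventually_bounds[OF assms e(2)] by (auto elim: eventually_mono)
  qed
  then show ?thesis
    by (rule asymp_equivI')
qed

end
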